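(* Let $n\equiv 1\pmod 4$. Let $I_1,I_2\subseteq\{0,1,\dots,(n-1)/2\}$ be such that $\{2i,2i+1\}\cap\{j,n-j\}=\emptyset$ for all $i\in I_1$ and $j\in I_2$, and let $$D=\bigcup_{i\in I_1}\{2i,2i+1\}\cup\bigcup_{j\in I_2}\{j,n-j\}.$$ Then the hypercube $Q_n$ admits a $D$-magic labeling.
   Context: The hypercube $Q_n$ has vertex set $\mathbb{F}_2^n$, two vertices adjacent iff they differ in exactly one coordinate; $d(x,y)$ is the graph distance (the Hamming distance). For a set of distances $D$ and a vertex $x$ of a graph $G$, $N_D(x)=\{y\in V(G): d(x,y)\in D\}$. For a graph $G$ of order $N$, a $D$-magic labeling is a bijection $f:V(G)\to\{1,\dots,N\}$ for which there exists a constant $k$ with $\sum_{y\in N_D(x)}f(y)=k$ for every vertex $x$. *)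

theory Defs
  imports Main
begin

(* The hypercube Q_n: vertex set F_2^n, modelled as 0/1 vectors of length n,
   i.e. functions nat => bool that are False outside {0..<n}. *)
definition hypercube_vertices :: "nat \<Rightarrow> (nat \<Rightarrow> bool) set" where
  "hypercube_vertices n = {x. \<forall>i. n \<le> i \<longrightarrow> \<not> x i}"

(* Graph distance in Q_n = Hamming distance. *)
definition hamming_dist :: "nat \<Rightarrow> (nat \<Rightarrow> bool) \<Rightarrow> (nat \<Rightarrow> bool) \<Rightarrow> nat" where
  "hamming_dist n x y = card {i. i < n \<and> x i \<noteq> y i}"

definition dist_nbhd :: "nat \<Rightarrow> nat set \<Rightarrow> (nat \<Rightarrow> bool) \<Rightarrow> (nat \<Rightarrow> bool) set" where
  "dist_nbhd n D x = {y \<in> hypercube_vertices n. hamming_dist n x y \<in> D}"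

definition hypercube_D_magic :: "nat \<Rightarrow> nat set \<Rightarrow> ((nat \<Rightarrow> bool) \<Rightarrow> nat) \<Rightarrow> bool" where
  "hypercube_D_magic n D f \<longleftrightarrow>
     bij_betw f (hypercube_vertices n) {1..2^n} \<and>
     (\<exists>k. \<forall>x \<in> hypercube_vertices n. (\<Sum>y \<in> dist_nbhd n D x. f y) = k)"

end

theory Submission
  imports Defs
begin

(* Write n = 2h + 1 with h even. Label a vertex y by 1 plus the binary number whose k-th digit is
   the parity of y on a window W_k of h + 1 coordinates: W_k is k together with {h+1..2h} if
   k <= h, and k together with {0..h-1} otherwise. As h is even, this parity code is an
   involution of F_2^n, so the labeling is a bijection onto {1..2^n}.
   Since |N_D(x)| does not depend on x, the labeling is D-magic as soon as every digit is 1 on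
   exactly half of N_D(x). This follows from an involution of N_D(x) that changes the parity on
   W_k: for distances j and n - j it is the complement (|W_k| is odd); for distances in blocks
   {2i, 2i+1} it flips y on the first pair {u, p u} (p matches W_k minus k with the complement
   of W_k) where y differs from x in exactly one place, which keeps the distance, and if there
   is no such pair it flips coordinate k, which keeps the distance inside its block. *)

definition toggle :: "nat set \<Rightarrow> (nat \<Rightarrow> bool) \<Rightarrow> nat \<Rightarrow> bool" where
  "toggle S y = (\<lambda>i. y i \<noteq> (i \<in> S))"

definition cube_complement :: "nat \<Rightarrow> (nat \<Rightarrow> bool) \<Rightarrow> nat \<Rightarrow> bool" where
  "cube_complement n y = (\<lambda>i. i < n \<and> \<not> y i)"

definition parity :: "nat set \<Rightarrow> (nat \<Rightarrow> bool) \<Rightarrow> bool" where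
  "parity W y \<longleftrightarrow> odd (card {i \<in> W. y i})"

definition binary_value :: "nat \<Rightarrow> (nat \<Rightarrow> bool) \<Rightarrow> nat" where
  "binary_value n y = horner_sum of_bool 2 (map y [0..<n])"

lemma hamming_dist_eq_sum: "hamming_dist n x y = (\<Sum>i<n. of_bool (x i \<noteq> y i))"
  unfolding hamming_dist_def by (simp add: lessThan_def Collect_conj_eq)

lemma hamming_dist_complement:
  "hamming_dist n x (cube_complement n y) = n - hamming_dist n x y"
proof -
  have "{i. i < n \<and> x i \<noteq> cube_complement n y i} = {..<n} - {i. i < n \<and> x i \<noteq> y i}"
    by (auto simp: cube_complement_def)
  then show ?thesis
    unfolding hamming_dist_def by (simp add: card_Diff_subset subset_eq)
qed

lemma cube_complement_in_vertices: "cube_complement n y \<in> hypercube_vertices n"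
  by (simp add: cube_complement_def hypercube_vertices_def)

lemma cube_complement_complement:
  "y \<in> hypercube_vertices n \<Longrightarrow> cube_complement n (cube_complement n y) = y"
  by (auto simp: cube_complement_def hypercube_vertices_def fun_eq_iff) (use not_le in blast)

lemma toggle_toggle [simp]: "toggle S (toggle S y) = y"
  by (auto simp: toggle_def fun_eq_iff)

lemma toggle_in_vertices:
  "y \<in> hypercube_vertices n \<Longrightarrow> S \<subseteq> {..<n} \<Longrightarrow> toggle S y \<in> hypercube_vertices n"
  by (auto simp: toggle_def hypercube_vertices_def subset_eq leD)

lemma card_dist_nbhd_translate:
  assumes "x \<in> hypercube_vertices n"
  shows "card (dist_nbhd n D x) = card (dist_nbhd n D (\<lambda>_. False))"
proof -
  have dist: "hamming_dist n (\<lambda>_. False) (toggle {i. x i} y) = hamming_dist n x y" for y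
    unfolding hamming_dist_def toggle_def by (rule arg_cong[where f = card]) auto
  have "{i. x i} \<subseteq> {..<n}"
    using assms by (auto simp: hypercube_vertices_def not_less[symmetric])
  then have "bij_betw (toggle {i. x i}) (dist_nbhd n D x) (dist_nbhd n D (\<lambda>_. False))"
    by (intro bij_betw_byWitness[where f' = "toggle {i. x i}"])
      (auto simp: dist_nbhd_def dist toggle_in_vertices simp flip: dist)
  then show ?thesis
    by (rule bij_betw_same_card)
qed

lemma bit_binary_value_iff: "bit (binary_value n y) k \<longleftrightarrow> k < n \<and> y k"
  by (auto simp: binary_value_def bit_horner_sum_bit_iff)

lemma binary_value_eq_sum: "binary_value n y = (\<Sum>k<n. 2 ^ k * of_bool (y k))"
  by (simp add: binary_value_def horner_sum_eq_sum atLeast0LessThan mult.commute)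

lemma binary_value_less: "binary_value n y < 2 ^ n"
  using horner_sum_of_bool_2_less[of "map y [0..<n]"] by (simp add: binary_value_def)

lemma binary_value_bits:
  fixes m :: nat
  assumes "m < 2 ^ n"
  shows "binary_value n (\<lambda>k. k < n \<and> bit m k) = m"
proof -
  have "binary_value n (\<lambda>k. k < n \<and> bit m k) = horner_sum of_bool 2 (map (bit m) [0..<n])"
    unfolding binary_value_def by (intro arg_cong[where f = "horner_sum of_bool 2"]) simp
  also have "\<dots> = m"
    using assms by (simp add: horner_sum_bit_eq_take_bit take_bit_nat_eq_self)
  finally show ?thesis .
qed

lemma bij_binary_value: "bij_betw (binary_value n) (hypercube_vertices n) {..<2 ^ n}"
proof (rule bij_betw_imageI)
  show "inj_on (binary_value n) (hypercube_vertices n)"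
  proof (rule inj_onI)
    fix y z assume "y \<in> hypercube_vertices n" "z \<in> hypercube_vertices n"
      and "binary_value n y = binary_value n z"
    then have "k < n \<and> y k \<longleftrightarrow> k < n \<and> z k" for k
      by (simp flip: bit_binary_value_iff)
    with \<open>y \<in> hypercube_vertices n\<close> \<open>z \<in> hypercube_vertices n\<close> show "y = z"
      by (auto simp: hypercube_vertices_def fun_eq_iff not_less[symmetric])
  qed
  show "binary_value n ` hypercube_vertices n = {..<2 ^ n}"
  proof
    show "binary_value n ` hypercube_vertices n \<subseteq> {..<2 ^ n}"
      using binary_value_less by blast
    show "{..<2 ^ n} \<subseteq> binary_value n ` hypercube_vertices n"
    proof
      fix m :: nat assume "m \<in> {..<2 ^ n}"
      then have "m = binary_value n (\<lambda>k. k < n \<and> bit m k)"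
        by (simp add: binary_value_bits)
      moreover have "(\<lambda>k. k < n \<and> bit m k) \<in> hypercube_vertices n"
        by (simp add: hypercube_vertices_def)
      ultimately show "m \<in> binary_value n ` hypercube_vertices n"
        by (rule image_eqI)
    qed
  qed
qed

lemma finite_hypercube_vertices: "finite (hypercube_vertices n)"
  using bij_binary_value bij_betw_finite by blast

lemma parity_cong: "(\<And>i. i \<in> W \<Longrightarrow> y i = z i) \<Longrightarrow> parity W y = parity W z"
  unfolding parity_def by (metis (mono_tags, lifting) Collect_cong)

lemma parity_insert:
  assumes "finite W" and "k \<notin> W"
  shows "parity (insert k W) y = (y k \<noteq> parity W y)"
proof -
  have "{i \<in> insert k W. y i} = (if y k then insert k {i \<in> W. y i} else {i \<in> W. y i})"
    by auto
  then show ?thesis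
    using assms by (simp add: parity_def)
qed

lemma parity_xor_const:
  assumes "finite W"
  shows "parity W (\<lambda>i. y i \<noteq> c) = (parity W y \<noteq> (c \<and> odd (card W)))"
proof (cases c)
  case True
  have "{i \<in> W. \<not> y i} = W - {i \<in> W. y i}"
    by auto
  moreover have "card {i \<in> W. y i} \<le> card W"
    using assms by (simp add: card_mono)
  ultimately show ?thesis
    using True assms by (auto simp: parity_def card_Diff_subset even_diff_nat)
qed (simp add: parity_def)

lemma parity_complement:
  assumes "W \<subseteq> {..<n}" and "odd (card W)"
  shows "parity W (cube_complement n y) = (\<not> parity W y)"
proof -
  have "parity W (cube_complement n y) = parity W (\<lambda>i. y i \<noteq> True)"
    using assms(1) by (intro parity_cong) (auto simp: cube_complement_def)
  also have "\<dots> = (\<not> parity W y)"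
    using parity_xor_const[of W y True] finite_subset[OF assms(1)] assms(2) by simp
  finally show ?thesis .
qed

lemma parity_toggle_single:
  assumes "finite W" and "S \<inter> W = {a}"
  shows "parity W (toggle S y) = (\<not> parity W y)"
proof -
  have a: "a \<in> W" "a \<notin> W - {a}" "insert a (W - {a}) = W"
    using assms(2) by auto
  have "parity (W - {a}) (toggle S y) = parity (W - {a}) y"
    using assms(2) by (intro parity_cong) (auto simp: toggle_def)
  moreover have "toggle S y a = (\<not> y a)"
    using assms(2) by (auto simp: toggle_def)
  ultimately show ?thesis
    using parity_insert[of "W - {a}" a] assms(1) a by auto
qed

lemma twice_card_eq_if_involution_negates:
  assumes "finite N"
    and "\<And>y. y \<in> N \<Longrightarrow> \<sigma> y \<in> N \<and> \<sigma> (\<sigma> y) = y \<and> (P (\<sigma> y) \<longleftrightarrow> \<not> P y)"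
  shows "2 * card {y \<in> N. P y} = card N"
proof -
  have "bij_betw \<sigma> {y \<in> N. P y} {y \<in> N. \<not> P y}"
    by (rule bij_betw_byWitness[where f' = \<sigma>]) (use assms(2) in auto)
  then have "card {y \<in> N. P y} = card {y \<in> N. \<not> P y}"
    by (rule bij_betw_same_card)
  moreover have "card N = card {y \<in> N. P y} + card {y \<in> N. \<not> P y}"
    using assms(1) by (subst card_Un_disjoint[symmetric]) (auto intro: arg_cong[where f = card])
  ultimately show ?thesis
    by simp
qed

locale coordinate_pairing =
  fixes n :: nat and W :: "nat set" and w0 :: nat and p :: "nat \<Rightarrow> nat"
  assumes W_subset: "W \<subseteq> {..<n}"
    and w0_in_W: "w0 \<in> W"
    and bij_p: "bij_betw p (W - {w0}) ({..<n} - W)"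
begin

lemma finite_W: "finite W"
  using W_subset finite_subset by blast

lemma p_mem: "u \<in> W - {w0} \<Longrightarrow> p u \<in> {..<n} - W"
  using bij_p by (auto simp: bij_betw_def)

lemma p_eq_iff: "u \<in> W - {w0} \<Longrightarrow> v \<in> W - {w0} \<Longrightarrow> p u = p v \<longleftrightarrow> u = v"
  using bij_p by (auto simp: bij_betw_def dest: inj_onD)

lemma sum_lessThan_eq_pairs:
  "(\<Sum>i<n. g i) = g w0 + (\<Sum>u\<in>W - {w0}. g u + g (p u))"
proof -
  have "(\<Sum>i<n. g i) = (\<Sum>i\<in>W. g i) + (\<Sum>i\<in>{..<n} - W. g i)"
    using W_subset by (simp add: sum.subset_diff ac_simps)
  also have "(\<Sum>i\<in>W. g i) = g w0 + (\<Sum>u\<in>W - {w0}. g u)"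
    using finite_W w0_in_W by (simp add: sum.remove)
  also have "(\<Sum>i\<in>{..<n} - W. g i) = (\<Sum>u\<in>W - {w0}. g (p u))"
    by (rule sum.reindex_bij_betw[OF bij_p, symmetric])
  finally show ?thesis
    by (simp add: sum.distrib add.assoc)
qed

definition differ_once :: "(nat \<Rightarrow> bool) \<Rightarrow> (nat \<Rightarrow> bool) \<Rightarrow> nat \<Rightarrow> bool" where
  "differ_once x y u \<longleftrightarrow> (x u \<noteq> y u) \<noteq> (x (p u) \<noteq> y (p u))"

definition switch_set :: "(nat \<Rightarrow> bool) \<Rightarrow> (nat \<Rightarrow> bool) \<Rightarrow> nat set" where
  "switch_set x y =
     (if \<exists>u \<in> W - {w0}. differ_once x y u
      then (let a = LEAST u. u \<in> W - {w0} \<and> differ_once x y u in {a, p a})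
      else {w0})"

definition switch :: "(nat \<Rightarrow> bool) \<Rightarrow> (nat \<Rightarrow> bool) \<Rightarrow> nat \<Rightarrow> bool" where
  "switch x y = toggle (switch_set x y) y"

lemma switch_set_cases:
  obtains (pair) a where "a \<in> W - {w0}" "differ_once x y a" "switch_set x y = {a, p a}"
  | (single) "\<forall>u \<in> W - {w0}. \<not> differ_once x y u" "switch_set x y = {w0}"
proof (cases "\<exists>u \<in> W - {w0}. differ_once x y u")
  case True
  define a where "a = (LEAST u. u \<in> W - {w0} \<and> differ_once x y u)"
  have "a \<in> W - {w0} \<and> differ_once x y a"
    unfolding a_def by (rule LeastI_ex) (use True in blast)
  moreover have "switch_set x y = {a, p a}"
    using True by (simp add: switch_set_def a_def Let_def)
  ultimately show thesis
    using pair by blast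
next
  case False
  then show thesis
    using single by (simp add: switch_set_def)
qed

lemma switch_set_respects_pairs:
  assumes "u \<in> W - {w0}"
  shows "u \<in> switch_set x y \<longleftrightarrow> p u \<in> switch_set x y"
proof (cases x y rule: switch_set_cases)
  case (pair a)
  then show ?thesis
    using assms p_mem[OF assms] p_mem[OF pair(1)] p_eq_iff[OF assms pair(1)] by auto
next
  case single
  then show ?thesis
    using assms p_mem[OF assms] w0_in_W by auto
qed

lemma switch_set_subset: "switch_set x y \<subseteq> {..<n}"
proof (cases x y rule: switch_set_cases)
  case (pair a)
  then show ?thesis
    using W_subset p_mem[OF pair(1)] by auto
qed (use W_subset w0_in_W in auto)

lemma switch_set_meets_W_once: "\<exists>a. switch_set x y \<inter> W = {a}"
proof (cases x y rule: switch_set_cases)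
  case (pair a)
  then show ?thesis
    using p_mem[OF pair(1)] by auto
qed (use w0_in_W in auto)

lemma differ_once_toggle:
  assumes "u \<in> S \<longleftrightarrow> p u \<in> S"
  shows "differ_once x (toggle S y) u = differ_once x y u"
  using assms by (auto simp: differ_once_def toggle_def)

lemma switch_set_switch: "switch_set x (switch x y) = switch_set x y"
proof -
  have "u \<in> W - {w0} \<and> differ_once x (switch x y) u \<longleftrightarrow> u \<in> W - {w0} \<and> differ_once x y u" for u
    using differ_once_toggle[OF switch_set_respects_pairs] by (auto simp: switch_def)
  then show ?thesis
    unfolding switch_set_def by (simp only: Bex_def)
qed

lemma switch_switch: "switch x (switch x y) = y"
  by (simp add: switch_def[of x "switch x y"] switch_set_switch) (simp add: switch_def)

lemma switch_in_vertices: "y \<in> hypercube_vertices n \<Longrightarrow> switch x y \<in> hypercube_vertices n"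
  by (simp add: switch_def switch_set_subset toggle_in_vertices)

lemma parity_switch: "parity W (switch x y) = (\<not> parity W y)"
proof -
  obtain a where "switch_set x y \<inter> W = {a}"
    using switch_set_meets_W_once by blast
  then show ?thesis
    unfolding switch_def by (rule parity_toggle_single[OF finite_W])
qed

lemma hamming_dist_switch_div2:
  "hamming_dist n x (switch x y) div 2 = hamming_dist n x y div 2"
proof -
  define e where "e z i = (of_bool (x i \<noteq> z i) :: nat)" for z i
  have dist: "hamming_dist n x z = e z w0 + (\<Sum>u\<in>W - {w0}. e z u + e z (p u))" for z
    unfolding hamming_dist_eq_sum e_def by (rule sum_lessThan_eq_pairs)
  show ?thesis
  proof (cases x y rule: switch_set_cases)
    case (pair a)
    have "e (switch x y) u + e (switch x y) (p u) = e y u + e y (p u)" if u: "u \<in> W - {w0}" for u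
    proof (cases "u = a")
      case True
      then show ?thesis
        using pair(2,3) by (auto simp: e_def switch_def toggle_def differ_once_def)
    next
      case False
      then have "u \<notin> switch_set x y" "p u \<notin> switch_set x y"
        using pair(1,3) u p_mem[OF u] p_mem[OF pair(1)] p_eq_iff[OF u pair(1)] by auto
      then show ?thesis
        by (simp add: e_def switch_def toggle_def)
    qed
    moreover have "e (switch x y) w0 = e y w0"
      using pair(1,3) p_mem[OF pair(1)] w0_in_W by (auto simp: e_def switch_def toggle_def)
    ultimately show ?thesis
      by (simp add: dist)
  next
    case single
    define R where "R = (\<Sum>u\<in>W - {w0}. e y u)"
    have "e (switch x y) u + e (switch x y) (p u) = 2 * e y u"
      and "e y (p u) = e y u" if u: "u \<in> W - {w0}" for u
      using single u p_mem[OF u] w0_in_W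
      by (auto simp: e_def switch_def toggle_def differ_once_def)
    then have "hamming_dist n x (switch x y) = e (switch x y) w0 + 2 * R"
      and "hamming_dist n x y = e y w0 + 2 * R"
      by (simp_all add: dist R_def sum_distrib_left sum.distrib mult_2)
    then show ?thesis
      by (simp add: e_def)
  qed
qed

lemma twice_card_parity_dist_nbhd:
  assumes odd_W: "odd (card W)" and x: "x \<in> hypercube_vertices n"
    and Da: "\<And>d d'. d \<in> Da \<Longrightarrow> d' div 2 = d div 2 \<Longrightarrow> d' \<in> Da"
    and Db: "\<And>d. d \<in> Db \<Longrightarrow> n - d \<in> Db"
    and disjoint: "Da \<inter> Db = {}"
  shows "2 * card {y \<in> dist_nbhd n (Da \<union> Db) x. parity W y} = card (dist_nbhd n (Da \<union> Db) x)"
proof -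
  let ?N = "dist_nbhd n (Da \<union> Db) x"
  define \<sigma> where
    "\<sigma> y = (if hamming_dist n x y \<in> Db then cube_complement n y else switch x y)" for y
  have "finite ?N"
    using finite_hypercube_vertices by (simp add: dist_nbhd_def)
  moreover have "\<sigma> y \<in> ?N \<and> \<sigma> (\<sigma> y) = y \<and> (parity W (\<sigma> y) \<longleftrightarrow> \<not> parity W y)"
    if y: "y \<in> ?N" for y
  proof (cases "hamming_dist n x y \<in> Db")
    case True
    then have "hamming_dist n x (cube_complement n y) \<in> Db"
      using Db by (simp add: hamming_dist_complement)
    then show ?thesis
      using True y
      by (simp add: \<sigma>_def dist_nbhd_def cube_complement_in_vertices cube_complement_complement
          parity_complement[OF W_subset odd_W])
  next
    case False
    then have "hamming_dist n x y \<in> Da"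
      using y by (simp add: dist_nbhd_def)
    then have "hamming_dist n x (switch x y) \<in> Da"
      using Da hamming_dist_switch_div2 by blast
    moreover have "hamming_dist n x (switch x y) \<notin> Db"
      using calculation disjoint by blast
    ultimately show ?thesis
      using False y
      by (simp add: \<sigma>_def dist_nbhd_def switch_in_vertices switch_switch parity_switch)
  qed
  ultimately show ?thesis
    by (rule twice_card_eq_if_involution_negates)
qed

end

lemma parity_insert_recovers:
  assumes "finite B" "k \<notin> B" "even (card B)"
    and "\<And>j. j \<in> B \<Longrightarrow> z j = (y j \<noteq> b)" and "z k = (y k \<noteq> parity B y)"
  shows "parity (insert k B) z = y k"
proof -
  have "parity B z = parity B (\<lambda>j. y j \<noteq> b)"
    using assms(4) by (rule parity_cong)
  also have "\<dots> = parity B y"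
    using parity_xor_const[of B y b] assms(1,3) by simp
  finally show ?thesis
    using assms(1,2,5) by (auto simp: parity_insert)
qed

lemma twice_sum_binary_value:
  assumes "finite N" and "\<And>k. k < n \<Longrightarrow> 2 * card {y \<in> N. c y k} = card N"
  shows "2 * (\<Sum>y\<in>N. binary_value n (c y)) = (2 ^ n - 1) * card N"
proof -
  have count: "(\<Sum>y\<in>N. of_bool (c y k)) = card {y \<in> N. c y k}" for k
    using assms(1) by (simp add: Int_def)
  have "(\<Sum>y\<in>N. binary_value n (c y)) = (\<Sum>k<n. \<Sum>y\<in>N. 2 ^ k * of_bool (c y k))"
    unfolding binary_value_eq_sum by (rule sum.swap)
  also have "\<dots> = (\<Sum>k<n. 2 ^ k * card {y \<in> N. c y k})"
    by (simp only: sum_distrib_left[symmetric] count)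
  finally have "2 * (\<Sum>y\<in>N. binary_value n (c y)) = (\<Sum>k<n. 2 ^ k * (2 * card {y \<in> N. c y k}))"
    by (simp add: sum_distrib_left ac_simps)
  also have "\<dots> = (\<Sum>k<n. 2 ^ k) * card N"
    using assms(2) by (simp add: sum_distrib_right)
  also have "\<dots> = (2 ^ n - 1) * card N"
    by (simp add: atLeast0LessThan[symmetric] sum_power2)
  finally show ?thesis .
qed

definition window :: "nat \<Rightarrow> nat \<Rightarrow> nat set" where
  "window h k = (if k \<le> h then insert k {h<..<2 * h + 1} else insert k {..<h})"

definition partner :: "nat \<Rightarrow> nat \<Rightarrow> nat \<Rightarrow> nat" where
  "partner h k u = (let v = if k \<le> h then u - Suc h else u + Suc h in if v = k then h else v)"

lemma card_window: "card (window h k) = h + 1"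
  by (simp add: window_def)

lemma coordinate_pairing_window:
  assumes "k < 2 * h + 1"
  shows "coordinate_pairing (2 * h + 1) (window h k) k (partner h k)"
proof
  show "window h k \<subseteq> {..<2 * h + 1}"
    using assms by (auto simp: window_def)
  show "k \<in> window h k"
    by (simp add: window_def)
  show "bij_betw (partner h k) (window h k - {k}) ({..<2 * h + 1} - window h k)"
    by (rule bij_betw_byWitness[where f' = "\<lambda>v. let u = if v = h then k else v in
          if k \<le> h then u + Suc h else u - Suc h"])
      (use assms in \<open>auto simp: window_def partner_def Let_def split: if_splits\<close>)
qed

definition parity_code :: "nat \<Rightarrow> (nat \<Rightarrow> bool) \<Rightarrow> nat \<Rightarrow> bool" where
  "parity_code h y = (\<lambda>k. k < 2 * h + 1 \<and> parity (window h k) y)"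

lemma parity_code_in_vertices: "parity_code h y \<in> hypercube_vertices (2 * h + 1)"
  by (simp add: parity_code_def hypercube_vertices_def)

lemma parity_code_parity_code:
  assumes "even h" and y: "y \<in> hypercube_vertices (2 * h + 1)"
  shows "parity_code h (parity_code h y) = y"
proof
  fix k
  let ?A = "{..<h}" and ?B = "{h<..<2 * h + 1}"
  consider "k \<le> h" | "h < k" "k < 2 * h + 1" | "2 * h + 1 \<le> k"
    by linarith
  then show "parity_code h (parity_code h y) k = y k"
  proof cases
    case 1
    have "parity (insert k ?B) (parity_code h y) = y k"
      by (rule parity_insert_recovers[where b = "parity ?A y"])
        (use 1 \<open>even h\<close> in \<open>auto simp: parity_code_def window_def parity_insert\<close>)
    then show ?thesis
      using 1 by (simp add: parity_code_def window_def)
  next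
    case 2
    have "parity (insert k ?A) (parity_code h y) = y k"
      by (rule parity_insert_recovers[where b = "parity ?B y"])
        (use 2 \<open>even h\<close> in \<open>auto simp: parity_code_def window_def parity_insert\<close>)
    then show ?thesis
      using 2 by (simp add: parity_code_def window_def)
  next
    case 3
    then show ?thesis
      using y by (simp add: parity_code_def hypercube_vertices_def)
  qed
qed

definition parity_label :: "nat \<Rightarrow> (nat \<Rightarrow> bool) \<Rightarrow> nat" where
  "parity_label h y = Suc (binary_value (2 * h + 1) (parity_code h y))"

lemma bij_parity_label:
  assumes "even h"
  shows "bij_betw (parity_label h) (hypercube_vertices (2 * h + 1)) {1..2 ^ (2 * h + 1)}"
proof -
  have "bij_betw (parity_code h) (hypercube_vertices (2 * h + 1)) (hypercube_vertices (2 * h + 1))"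
    by (rule bij_betw_byWitness[where f' = "parity_code h"])
      (use parity_code_parity_code[OF assms] parity_code_in_vertices[of h] in auto)
  then have "bij_betw (binary_value (2 * h + 1) \<circ> parity_code h)
      (hypercube_vertices (2 * h + 1)) {..<2 ^ (2 * h + 1)}"
    using bij_binary_value by (rule bij_betw_trans)
  moreover have "bij_betw Suc {..<2 ^ (2 * h + 1)} {1..2 ^ (2 * h + 1)}"
    by (simp add: atLeast0LessThan[symmetric] atLeastLessThanSuc_atLeastAtMost)
  ultimately have "bij_betw (Suc \<circ> (binary_value (2 * h + 1) \<circ> parity_code h))
      (hypercube_vertices (2 * h + 1)) {1..2 ^ (2 * h + 1)}"
    by (rule bij_betw_trans)
  then show ?thesis
    by (simp add: parity_label_def[abs_def] comp_def)
qed

lemma twice_sum_parity_label: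
  assumes "even h" and x: "x \<in> hypercube_vertices (2 * h + 1)"
    and Da: "\<And>d d'. d \<in> Da \<Longrightarrow> d' div 2 = d div 2 \<Longrightarrow> d' \<in> Da"
    and Db: "\<And>d. d \<in> Db \<Longrightarrow> 2 * h + 1 - d \<in> Db"
    and disjoint: "Da \<inter> Db = {}"
  shows "2 * (\<Sum>y\<in>dist_nbhd (2 * h + 1) (Da \<union> Db) x. parity_label h y)
    = (2 ^ (2 * h + 1) + 1) * card (dist_nbhd (2 * h + 1) (Da \<union> Db) x)"
proof -
  let ?n = "2 * h + 1"
  let ?N = "dist_nbhd ?n (Da \<union> Db) x"
  have "finite ?N"
    using finite_hypercube_vertices by (simp add: dist_nbhd_def)
  moreover have "2 * card {y \<in> ?N. parity_code h y k} = card ?N" if "k < ?n" for k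
  proof -
    interpret coordinate_pairing ?n "window h k" k "partner h k"
      using that by (rule coordinate_pairing_window)
    have "odd (card (window h k))"
      using \<open>even h\<close> by (simp add: card_window)
    then show ?thesis
      using twice_card_parity_dist_nbhd[OF _ x Da Db disjoint] that
      by (simp add: parity_code_def)
  qed
  ultimately have "2 * (\<Sum>y\<in>?N. binary_value ?n (parity_code h y)) = (2 ^ ?n - 1) * card ?N"
    by (rule twice_sum_binary_value)
  moreover have "(\<Sum>y\<in>?N. parity_label h y) = card ?N + (\<Sum>y\<in>?N. binary_value ?n (parity_code h y))"
    unfolding parity_label_def Suc_eq_plus1_left sum.distrib by simp
  ultimately show ?thesis
    by (simp add: algebra_simps)
qed

lemma hypercube_D_magic_parity_label:
  assumes "even h"
    and Da: "\<And>d d'. d \<in> Da \<Longrightarrow> d' div 2 = d div 2 \<Longrightarrow> d' \<in> Da"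
    and Db: "\<And>d. d \<in> Db \<Longrightarrow> 2 * h + 1 - d \<in> Db"
    and disjoint: "Da \<inter> Db = {}"
  shows "hypercube_D_magic (2 * h + 1) (Da \<union> Db) (parity_label h)"
proof -
  let ?n = "2 * h + 1"
  have twice_sum: "2 * (\<Sum>y\<in>dist_nbhd ?n (Da \<union> Db) x. parity_label h y)
      = (2 ^ ?n + 1) * card (dist_nbhd ?n (Da \<union> Db) x)"
    if "x \<in> hypercube_vertices ?n" for x
    using assms(1) that Da Db disjoint by (rule twice_sum_parity_label)
  have "(\<Sum>y\<in>dist_nbhd ?n (Da \<union> Db) x. parity_label h y)
      = (\<Sum>y\<in>dist_nbhd ?n (Da \<union> Db) (\<lambda>_. False). parity_label h y)"
    if "x \<in> hypercube_vertices ?n" for x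
    using twice_sum[OF that] twice_sum[of "\<lambda>_. False"] card_dist_nbhd_translate[OF that]
    by (simp add: hypercube_vertices_def)
  then show ?thesis
    using bij_parity_label[OF assms(1)] by (auto simp: hypercube_D_magic_def)
qed

lemma mem_block_union_iff: "(d :: nat) \<in> (\<Union>i \<in> I. {2 * i, 2 * i + 1}) \<longleftrightarrow> d div 2 \<in> I"
proof -
  have "d = 2 * (d div 2) \<or> d = 2 * (d div 2) + 1"
    by presburger
  then show ?thesis
    by auto
qed

lemma diff_mem_reflected_union:
  fixes n :: nat
  assumes "J \<subseteq> {..n}" and "d \<in> (\<Union>j \<in> J. {j, n - j})"
  shows "n - d \<in> (\<Union>j \<in> J. {j, n - j})"
proof -
  obtain j where "j \<in> J" and "d = j \<or> d = n - j"
    using assms(2) by blast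
  moreover have "j \<le> n"
    using assms(1) \<open>j \<in> J\<close> by auto
  ultimately show ?thesis
    by auto
qed

theorem theorem3p9:
  fixes n :: nat and I1 I2 D :: "nat set"
  assumes "n mod 4 = 1"
    and "I1 \<subseteq> {0..(n - 1) div 2}"
    and "I2 \<subseteq> {0..(n - 1) div 2}"
    and "\<forall>i \<in> I1. \<forall>j \<in> I2. {2*i, 2*i+1} \<inter> {j, n - j} = {}"
    and "D = (\<Union>i \<in> I1. {2*i, 2*i+1}) \<union> (\<Union>j \<in> I2. {j, n - j})"
  shows "\<exists>f. hypercube_D_magic n D f"
proof -
  define h where "h = (n - 1) div 2"
  have n: "n = 2 * h + 1" and "even h"
    using assms(1) unfolding h_def by presburger+
  have "I2 \<subseteq> {..n}"
    using assms(3) by auto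
  have "hypercube_D_magic n D (parity_label h)"
    unfolding assms(5) n
  proof (rule hypercube_D_magic_parity_label[OF \<open>even h\<close>])
    show "d' \<in> (\<Union>i \<in> I1. {2*i, 2*i+1})"
      if "d \<in> (\<Union>i \<in> I1. {2*i, 2*i+1})" and "d' div 2 = d div 2" for d d'
      using that unfolding mem_block_union_iff by simp
    show "2 * h + 1 - d \<in> (\<Union>j \<in> I2. {j, 2 * h + 1 - j})"
      if "d \<in> (\<Union>j \<in> I2. {j, 2 * h + 1 - j})" for d
      using \<open>I2 \<subseteq> {..n}\<close> that unfolding n by (rule diff_mem_reflected_union)
    show "(\<Union>i \<in> I1. {2*i, 2*i+1}) \<inter> (\<Union>j \<in> I2. {j, 2 * h + 1 - j}) = {}"
      using assms(4) unfolding n by blast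
  qed
  then show ?thesis
    by blast
qed

end
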